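(* Let $r\ge0$ and let $P$ be a finite nonempty subset of $\mathbb{R}$ with $m=\min(P)$. Then \[\mathrm{AR}_r(P)\simeq\bigvee_{p\in P,\ m<p\le m+r}\mathrm{susp}\bigl(\mathrm{AR}_r(\{q\in P\mid q>p+r\})\bigr).\]
   Context: For a subset $P$ of a metric space with metric $d$ and $r\ge0$, the anti-Rips complex $\mathrm{AR}_r(P)$ is the simplicial complex with vertex set $P$ whose simplices are the finite subsets of $P$ in which any two distinct points $p,q$ satisfy $d(p,q)>r$; on $\mathbb{R}$, $d(p,q)=|p-q|$. $\mathrm{AR}_r(\emptyset)$ is the empty complex, $\mathrm{susp}(\emptyset)=S^0$, and a wedge over an empty index set is a point. *)

theory Defs
  imports "HOL-Analysis.Analysis"
begin

definition anti_rips :: "real \<Rightarrow> 'a::metric_space set \<Rightarrow> 'a set set" where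
  "anti_rips r P = {\<sigma>. \<sigma> \<subseteq> P \<and> finite \<sigma> \<and>
                     (\<forall>p\<in>\<sigma>. \<forall>q\<in>\<sigma>. p \<noteq> q \<longrightarrow> dist p q > r)}"

definition geom_realization :: "'a set \<Rightarrow> 'a set set \<Rightarrow> ('a \<Rightarrow> real) topology" where
  "geom_realization V K = subtopology (powertop_real V)
     {f \<in> topspace (powertop_real V). (\<forall>v\<in>V. f v \<ge> 0) \<and> finite {v\<in>V. f v \<noteq> 0} \<and>
        (\<Sum>v\<in>{v\<in>V. f v \<noteq> 0}. f v) = 1 \<and> {v\<in>V. f v \<noteq> 0} \<in> K}"

definition quotient_topology :: "'a topology \<Rightarrow> ('a \<Rightarrow> 'b) \<Rightarrow> 'b set \<Rightarrow> 'b topology" where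
  "quotient_topology X f S =
     topology (\<lambda>U. U \<subseteq> S \<and> openin X {x \<in> topspace X. f x \<in> U})"

text \<open>Unreduced suspension: X \<times> [-1,1] with X \<times> {1} and X \<times> {-1} each collapsed
to a point (North, South). For X empty this is the two-point discrete space S^0.\<close>
datatype 'a susp = North | South | Mid 'a real

definition susp_map :: "'a \<times> real \<Rightarrow> 'a susp" where
  "susp_map = (\<lambda>(x,t). if t = 1 then North else if t = -1 then South else Mid x t)"

definition suspension :: "'a topology \<Rightarrow> 'a susp topology" where
  "suspension X = quotient_topology (prod_topology X (top_of_set {-1..1})) susp_map
      ({North, South} \<union> susp_map ` topspace (prod_topology X (top_of_set {-1..1})))"

text \<open>Wedge of a family of pointed spaces (X i, b i), i \<in> I: the disjoint sum with all
base points identified to one point None. Over an empty index set it is a point.\<close>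
definition wedge :: "('i \<Rightarrow> 'a topology) \<Rightarrow> ('i \<Rightarrow> 'a) \<Rightarrow> 'i set \<Rightarrow> ('i \<times> 'a) option topology" where
  "wedge X b I = quotient_topology (sum_topology X I)
      (\<lambda>(i,x). if x = b i then None else Some (i,x))
      (insert None ((\<lambda>(i,x). if x = b i then None else Some (i,x)) ` topspace (sum_topology X I)))"

end

theory Submission
  imports Defs
begin

(* Let m = min P, N = P \<inter> (m, m + r] and far p = {q \<in> P. q > p + r}, and view the realization
   of AR_r(P) as the barycentric weight functions x on P.  Since {m} \<union> N has diameter at most r,
   the support of x meets it in at most one point, and a point p \<in> N of the support confines the
   rest of the support to far p.
   The wedge embeds into R^P: the base point goes to 0, and the point at height s = (1 - t)/2 over y
   in the p-th suspension goes to the function with value s at p and s (1 - s) y on far p.  As a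
   continuous injection of a compact space into a Hausdorff space this is a homeomorphism onto its
   image E.  Forgetting the weight at m and scaling the weights on far m by the total weight on N
   maps the realization into E; conversely, E maps back by sending heights s \<le> 1/2 over p into the
   cone on m and heights s \<ge> 1/2 into the cone on p.  Explicit homotopies, which lower the weights
   on N by \<tau> \<in> [0, 1/2], show that the two maps are homotopy inverse. *)

lemma istopology_quotient:
  "istopology (\<lambda>U. U \<subseteq> S \<and> openin X {x \<in> topspace X. f x \<in> U})"
  unfolding istopology_def
proof (rule conjI; intro allI impI)
  fix U V assume "U \<subseteq> S \<and> openin X {x \<in> topspace X. f x \<in> U}"
    and "V \<subseteq> S \<and> openin X {x \<in> topspace X. f x \<in> V}"
  moreover have "{x \<in> topspace X. f x \<in> U \<inter> V} =
      {x \<in> topspace X. f x \<in> U} \<inter> {x \<in> topspace X. f x \<in> V}"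
    by auto
  ultimately show "U \<inter> V \<subseteq> S \<and> openin X {x \<in> topspace X. f x \<in> U \<inter> V}"
    by auto
next
  fix K assume K: "\<forall>U\<in>K. U \<subseteq> S \<and> openin X {x \<in> topspace X. f x \<in> U}"
  have "{x \<in> topspace X. f x \<in> \<Union>K} = (\<Union>U\<in>K. {x \<in> topspace X. f x \<in> U})"
    by auto
  moreover have "openin X (\<Union>U\<in>K. {x \<in> topspace X. f x \<in> U})"
    using K by (intro openin_Union) blast
  ultimately show "\<Union>K \<subseteq> S \<and> openin X {x \<in> topspace X. f x \<in> \<Union>K}"
    using K by auto
qed

lemma openin_quotient_topology:
  "openin (quotient_topology X f S) U \<longleftrightarrow> U \<subseteq> S \<and> openin X {x \<in> topspace X. f x \<in> U}"
  unfolding quotient_topology_def by (simp add: topology_inverse'[OF istopology_quotient])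

lemma topspace_quotient_topology:
  assumes "f ` topspace X \<subseteq> S"
  shows "topspace (quotient_topology X f S) = S"
proof -
  have "{x \<in> topspace X. f x \<in> S} = topspace X"
    using assms by auto
  then have "openin (quotient_topology X f S) S"
    by (simp add: openin_quotient_topology)
  then have "S \<subseteq> topspace (quotient_topology X f S)"
    by (rule openin_subset)
  moreover have "topspace (quotient_topology X f S) \<subseteq> S"
    using openin_topspace[of "quotient_topology X f S"] unfolding openin_quotient_topology by blast
  ultimately show ?thesis
    by blast
qed

lemma continuous_map_from_quotient_topology:
  assumes "f ` topspace X \<subseteq> S" "g ` S \<subseteq> topspace Y" "continuous_map X Y (g \<circ> f)"
  shows "continuous_map (quotient_topology X f S) Y g"
  unfolding continuous_map_def
proof (intro conjI allI impI)
  show "g \<in> topspace (quotient_topology X f S) \<rightarrow> topspace Y"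
    using assms by (auto simp: topspace_quotient_topology)
next
  fix U assume "openin Y U"
  moreover have "{x \<in> topspace X. f x \<in> {z \<in> topspace (quotient_topology X f S). g z \<in> U}}
      = {x \<in> topspace X. (g \<circ> f) x \<in> U}"
    using assms(1) by (auto simp: topspace_quotient_topology)
  ultimately show "openin (quotient_topology X f S) {x \<in> topspace (quotient_topology X f S). g x \<in> U}"
    using assms(3) by (simp add: continuous_map_def openin_quotient_topology
        topspace_quotient_topology[OF assms(1)])
qed

lemma continuous_map_quotient_topology_map:
  assumes "f ` topspace X \<subseteq> S"
  shows "continuous_map X (quotient_topology X f S) f"
  unfolding continuous_map_def
proof (intro conjI allI impI)
  show "f \<in> topspace X \<rightarrow> topspace (quotient_topology X f S)"
    using assms by (auto simp: topspace_quotient_topology)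
next
  fix U assume "openin (quotient_topology X f S) U"
  then show "openin X {x \<in> topspace X. f x \<in> U}"
    by (simp add: openin_quotient_topology)
qed

lemma continuous_map_from_sum_topology:
  assumes "\<And>i. i \<in> I \<Longrightarrow> continuous_map (X i) Y (\<lambda>x. f (i, x))"
  shows "continuous_map (sum_topology X I) Y f"
  unfolding continuous_map_def
proof (intro conjI allI impI)
  show "f \<in> topspace (sum_topology X I) \<rightarrow> topspace Y"
    using assms by (fastforce simp: continuous_map_def Pi_iff)
next
  fix U assume U: "openin Y U"
  have "openin (X i) {x. (i, x) \<in> {z \<in> topspace (sum_topology X I). f z \<in> U}}" if "i \<in> I" for i
  proof -
    have "{x. (i, x) \<in> {z \<in> topspace (sum_topology X I). f z \<in> U}} = {x \<in> topspace (X i). f (i, x) \<in> U}"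
      using that by auto
    then show ?thesis
      using assms[OF that] U by (simp add: continuous_map_def)
  qed
  then show "openin (sum_topology X I) {x \<in> topspace (sum_topology X I). f x \<in> U}"
    by (auto simp: openin_sum_topology)
qed

lemma homotopy_equivalent_space_by_homotopies:
  assumes f: "continuous_map X Y f" and g: "continuous_map Y X g"
    and H: "continuous_map (prod_topology (top_of_set {0..(1::real)}) X) X H"
    and "\<And>x. x \<in> topspace X \<Longrightarrow> H (0, x) = x" "\<And>x. x \<in> topspace X \<Longrightarrow> H (1, x) = g (f x)"
    and K: "continuous_map (prod_topology (top_of_set {0..(1::real)}) Y) Y K"
    and "\<And>y. y \<in> topspace Y \<Longrightarrow> K (0, y) = y" "\<And>y. y \<in> topspace Y \<Longrightarrow> K (1, y) = f (g y)"
  shows "X homotopy_equivalent_space Y"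
proof -
  have "homotopic_with (\<lambda>x. True) X X id (g \<circ> f)"
  proof (subst homotopic_with)
    show "\<exists>h. continuous_map (prod_topology (top_of_set {0..(1::real)}) X) X h \<and>
        (\<forall>x\<in>topspace X. h (0, x) = id x) \<and> (\<forall>x\<in>topspace X. h (1, x) = (g \<circ> f) x) \<and>
        (\<forall>t\<in>{0..1}. True)"
      using H assms(4,5) by (intro exI[of _ H]) auto
  qed simp
  moreover have "homotopic_with (\<lambda>x. True) Y Y id (f \<circ> g)"
  proof (subst homotopic_with)
    show "\<exists>h. continuous_map (prod_topology (top_of_set {0..(1::real)}) Y) Y h \<and>
        (\<forall>y\<in>topspace Y. h (0, y) = id y) \<and> (\<forall>y\<in>topspace Y. h (1, y) = (f \<circ> g) y) \<and>
        (\<forall>t\<in>{0..1}. True)"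
      using K assms(7,8) by (intro exI[of _ K]) auto
  qed simp
  ultimately show ?thesis
    using f g unfolding homotopy_equivalent_space_def by (metis homotopic_with_sym)
qed

lemma continuous_map_compose_continuous_on:
  assumes "continuous_on D \<phi>" "continuous_map Z euclidean g" "g ` topspace Z \<subseteq> D"
  shows "continuous_map Z euclidean (\<phi> \<circ> g)"
proof (rule continuous_map_compose)
  show "continuous_map Z (top_of_set D) g"
    using assms(2,3) by (auto intro: continuous_map_into_subtopology)
  show "continuous_map (top_of_set D) euclidean \<phi>"
    using assms(1) by simp
qed

definition separated :: "real \<Rightarrow> 'a::metric_space set \<Rightarrow> ('a \<Rightarrow> real) \<Rightarrow> bool" where
  "separated r V x \<longleftrightarrow> (\<forall>a\<in>V. \<forall>b\<in>V. a \<noteq> b \<and> dist a b \<le> r \<longrightarrow> x a = 0 \<or> x b = 0)"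

definition anti_rips_points :: "real \<Rightarrow> 'a::metric_space set \<Rightarrow> ('a \<Rightarrow> real) set" where
  "anti_rips_points r V =
     {x \<in> extensional V. (\<forall>v\<in>V. 0 \<le> x v) \<and> sum x V = 1 \<and> separated r V x}"

lemma geom_realization_anti_rips:
  assumes V: "finite V"
  shows "geom_realization V (anti_rips r V) = subtopology (powertop_real V) (anti_rips_points r V)"
proof -
  have PiE: "f \<in> topspace (powertop_real V) \<longleftrightarrow> f \<in> extensional V" for f
    by (auto simp: PiE_def)
  have support_sum: "(\<Sum>v\<in>{v\<in>V. f v \<noteq> 0}. f v) = sum f V" for f
    using V by (intro sum.mono_neutral_left) auto
  have support: "{v\<in>V. f v \<noteq> 0} \<in> anti_rips r V \<longleftrightarrow> separated r V f" for f
    using V by (auto simp: anti_rips_def separated_def) (meson not_le)+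
  show ?thesis
    using V unfolding geom_realization_def anti_rips_points_def PiE support_sum support by auto
qed

lemma topspace_geom_realization_anti_rips:
  "finite V \<Longrightarrow> topspace (geom_realization V (anti_rips r V)) = anti_rips_points r V"
  by (auto simp: geom_realization_anti_rips anti_rips_points_def PiE_def)

lemma anti_rips_points_le_1:
  assumes "x \<in> anti_rips_points r V" "finite V" "v \<in> V"
  shows "x v \<le> 1"
  using assms member_le_sum[of v V x] by (auto simp: anti_rips_points_def)

lemma closedin_anti_rips_points:
  assumes V: "finite V"
  shows "closedin (powertop_real V) (anti_rips_points r V)"
proof -
  define B where "B = {p \<in> V \<times> V. fst p \<noteq> snd p \<and> dist (fst p) (snd p) \<le> r}"
  have B: "finite B"
    using V unfolding B_def by auto
  define d where "d x = (\<Sum>v\<in>V. \<bar>x v\<bar> - x v) + \<bar>sum x V - 1\<bar> + (\<Sum>p\<in>B. \<bar>x (fst p) * x (snd p)\<bar>)"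
    for x :: "'a \<Rightarrow> real"
  have d_cont: "continuous_map (powertop_real V) euclideanreal d"
    unfolding d_def using B_def
    by (intro continuous_intros continuous_map_product_projection B V) auto
  have abs_minus_self: "\<bar>a\<bar> - a = 0 \<longleftrightarrow> 0 \<le> a" for a :: real
    by auto
  have "d x = 0 \<longleftrightarrow> (\<forall>v\<in>V. 0 \<le> x v) \<and> sum x V = 1 \<and> (\<forall>p\<in>B. x (fst p) * x (snd p) = 0)" for x
  proof -
    have "0 \<le> (\<Sum>v\<in>V. \<bar>x v\<bar> - x v)" "0 \<le> (\<Sum>p\<in>B. \<bar>x (fst p) * x (snd p)\<bar>)"
      by (intro sum_nonneg; simp)+
    then have "d x = 0 \<longleftrightarrow> (\<Sum>v\<in>V. \<bar>x v\<bar> - x v) = 0 \<and> sum x V = 1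
        \<and> (\<Sum>p\<in>B. \<bar>x (fst p) * x (snd p)\<bar>) = 0"
      unfolding d_def by linarith
    also have "\<dots> \<longleftrightarrow> (\<forall>v\<in>V. \<bar>x v\<bar> - x v = 0) \<and> sum x V = 1 \<and> (\<forall>p\<in>B. x (fst p) * x (snd p) = 0)"
      using V B by (simp add: sum_nonneg_eq_0_iff)
    finally show ?thesis
      by (simp only: abs_minus_self)
  qed
  moreover have "separated r V x \<longleftrightarrow> (\<forall>p\<in>B. x (fst p) * x (snd p) = 0)" for x
    by (auto simp: separated_def B_def)
  ultimately have zero_set: "anti_rips_points r V = {x \<in> topspace (powertop_real V). d x \<in> {0}}"
    by (auto simp: anti_rips_points_def PiE_def)
  show ?thesis
    unfolding zero_set by (rule closedin_continuous_map_preimage[OF d_cont]) simp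
qed

lemma compact_space_geom_realization_anti_rips:
  assumes V: "finite V"
  shows "compact_space (geom_realization V (anti_rips r V))"
proof -
  have "anti_rips_points r V \<subseteq> PiE V (\<lambda>_. {0..1})"
    using anti_rips_points_le_1[of _ r V] V by (auto simp: anti_rips_points_def PiE_def)
  moreover have "compactin (powertop_real V) (PiE V (\<lambda>_. {0..1}))"
    by (simp add: compactin_PiE)
  ultimately have "compactin (powertop_real V) (anti_rips_points r V)"
    using closedin_anti_rips_points[OF V] by (metis closed_compactin)
  then show ?thesis
    by (simp add: geom_realization_anti_rips V compact_space_subtopology)
qed

locale anti_rips_line =
  fixes r :: real and P :: "real set"
  assumes r_nonneg: "0 \<le> r" and finite_P: "finite P" and P_nonempty: "P \<noteq> {}"
begin

definition m :: real where
  "m = Min P"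

definition N :: "real set" where
  "N = {p\<in>P. Min P < p \<and> p \<le> Min P + r}"

definition far :: "real \<Rightarrow> real set" where
  "far p = {q\<in>P. q > p + r}"

abbreviation T :: "(real \<Rightarrow> real) set" where
  "T \<equiv> anti_rips_points r P"

lemma m_in_P: "m \<in> P" and m_le: "q \<in> P \<Longrightarrow> m \<le> q"
  using finite_P P_nonempty by (auto simp: m_def)

lemma mem_N_iff: "p \<in> N \<longleftrightarrow> p \<in> P \<and> m < p \<and> p \<le> m + r"
  by (simp add: N_def m_def)

lemma mem_far_iff: "q \<in> far p \<longleftrightarrow> q \<in> P \<and> p + r < q"
  by (simp add: far_def)

lemma N_subset: "N \<subseteq> P" and far_subset: "far p \<subseteq> P"
  by (auto simp: mem_N_iff mem_far_iff)

lemma finite_N: "finite N" and finite_far: "finite (far p)"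
  using finite_subset[OF N_subset finite_P] finite_subset[OF far_subset finite_P] .

lemma P_cases: "q \<in> P \<Longrightarrow> q = m \<or> q \<in> N \<or> q \<in> far m"
  using m_le[of q] by (auto simp: mem_N_iff mem_far_iff)

lemma m_notin_N: "m \<notin> N"
  by (simp add: mem_N_iff)

lemma notin_far_self: "p \<notin> far p"
  using r_nonneg by (simp add: mem_far_iff)

lemma m_notin_far: "p \<in> N \<Longrightarrow> m \<notin> far p"
  using r_nonneg by (auto simp: mem_N_iff mem_far_iff)

lemma N_disjoint_far: "p \<in> N \<Longrightarrow> q \<in> N \<Longrightarrow> q \<notin> far p"
  by (auto simp: mem_N_iff mem_far_iff)

lemma far_m_disjoint_N: "q \<in> far m \<Longrightarrow> q \<notin> N"
  by (auto simp: mem_N_iff mem_far_iff)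

lemma far_subset_far_m: "p \<in> N \<Longrightarrow> far p \<subseteq> far m"
  by (auto simp: mem_N_iff mem_far_iff)

lemma dist_far: "q \<in> far p \<Longrightarrow> r < dist q p"
  by (auto simp: mem_far_iff dist_real_def)

lemma dist_N_m: "p \<in> N \<Longrightarrow> dist p m \<le> r"
  by (auto simp: mem_N_iff dist_real_def)

lemma dist_N_not_far: "p \<in> N \<Longrightarrow> q \<in> P \<Longrightarrow> q \<notin> far p \<Longrightarrow> dist q p \<le> r"
  using m_le[of q] by (auto simp: mem_N_iff mem_far_iff dist_real_def)

lemma close_to_m_in_N: "q \<in> P \<Longrightarrow> q \<noteq> m \<Longrightarrow> dist q m \<le> r \<Longrightarrow> q \<in> N"
  using m_le[of q] by (auto simp: mem_N_iff dist_real_def)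

lemma sum_P_split: "sum f P = f m + sum f N + sum f (far m)"
proof -
  have "P = insert m (N \<union> far m)"
    using P_cases m_in_P N_subset far_subset by blast
  then have "sum f P = sum f (insert m (N \<union> far m))"
    by (rule arg_cong)
  also have "\<dots> = f m + sum f (N \<union> far m)"
    using m_notin_N notin_far_self finite_N finite_far by (intro sum.insert) auto
  also have "sum f (N \<union> far m) = sum f N + sum f (far m)"
    using far_m_disjoint_N finite_N finite_far by (intro sum.union_disjoint) auto
  finally show ?thesis
    by (simp add: add.assoc)
qed

lemma ext_eqI:
  assumes "f \<in> extensional P" "g \<in> extensional P"
    and "f m = g m" "\<And>q. q \<in> N \<Longrightarrow> f q = g q" "\<And>q. q \<in> far m \<Longrightarrow> f q = g q"
  shows "f = g"
  using assms P_cases by (metis extensionalityI)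

definition near_mass :: "(real \<Rightarrow> real) \<Rightarrow> real" where
  "near_mass x = (\<Sum>q\<in>N. x q)"

lemma near_mass_cong: "(\<And>q. q \<in> N \<Longrightarrow> x q = x' q) \<Longrightarrow> near_mass x = near_mass x'"
  unfolding near_mass_def by (rule sum.cong) auto

lemma near_mass_single:
  "p \<in> N \<Longrightarrow> (\<And>q. q \<in> N \<Longrightarrow> q \<noteq> p \<Longrightarrow> x q = 0) \<Longrightarrow> near_mass x = x p"
  unfolding near_mass_def using finite_N by (subst sum.remove[of _ p]) (auto intro!: sum.neutral)

lemma near_mass_zero: "(\<And>q. q \<in> N \<Longrightarrow> x q = 0) \<Longrightarrow> near_mass x = 0"
  unfolding near_mass_def by simp

lemma T_nonneg: "x \<in> T \<Longrightarrow> q \<in> P \<Longrightarrow> 0 \<le> x q"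
  by (simp add: anti_rips_points_def)

lemma le_near_mass: "x \<in> T \<Longrightarrow> q \<in> N \<Longrightarrow> x q \<le> near_mass x"
  unfolding near_mass_def using finite_N N_subset T_nonneg by (intro member_le_sum) auto

lemma near_mass_nonneg: "x \<in> T \<Longrightarrow> 0 \<le> near_mass x"
  unfolding near_mass_def using N_subset T_nonneg by (intro sum_nonneg) auto

lemma sum_T: "x \<in> T \<Longrightarrow> x m + near_mass x + sum x (far m) = 1"
  using sum_P_split[of x] by (simp add: anti_rips_points_def near_mass_def)

lemma T_m_vanishes_on_N: "x \<in> T \<Longrightarrow> x m \<noteq> 0 \<Longrightarrow> q \<in> N \<Longrightarrow> x q = 0"
  using m_in_P N_subset dist_N_m m_notin_N
  by (fastforce simp: anti_rips_points_def separated_def)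

lemma T_near_cases:
  assumes x: "x \<in> T"
  obtains "\<And>q. q \<in> N \<Longrightarrow> x q = 0"
  | p where "p \<in> N" "0 < x p" "\<And>q. q \<in> P \<Longrightarrow> q \<noteq> p \<Longrightarrow> q \<notin> far p \<Longrightarrow> x q = 0"
proof (cases "\<forall>q\<in>N. x q = 0")
  case False
  then obtain p where p: "p \<in> N" "x p \<noteq> 0"
    by auto
  then have "0 < x p"
    using x T_nonneg[of x p] N_subset by fastforce
  moreover have "x q = 0" if "q \<in> P" "q \<noteq> p" "q \<notin> far p" for q
    using x p that dist_N_not_far[OF p(1) that(1,3)] N_subset
    by (auto simp: anti_rips_points_def separated_def)
  ultimately show ?thesis
    using p that(2) by blast
qed (use that in blast)

lemma separated_by_support:
  assumes "separated r P x"
    and "\<And>q. q \<in> P \<Longrightarrow> z q \<noteq> 0 \<Longrightarrow> q = m \<or> x q \<noteq> 0"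
    and "z m \<noteq> 0 \<Longrightarrow> \<forall>q\<in>N. z q = 0"
  shows "separated r P z"
  unfolding separated_def
proof (intro ballI impI)
  fix a b assume ab: "a \<in> P" "b \<in> P" "a \<noteq> b \<and> dist a b \<le> r"
  show "z a = 0 \<or> z b = 0"
  proof (rule ccontr)
    assume nz: "\<not> (z a = 0 \<or> z b = 0)"
    show False
    proof (cases "a = m \<or> b = m")
      case True
      then have "a \<in> N \<or> b \<in> N"
        using ab close_to_m_in_N[of a] close_to_m_in_N[of b] by (auto simp: dist_commute)
      then show False
        using assms(3) nz True ab by auto
    next
      case False
      then show False
        using assms(1,2) ab nz unfolding separated_def by metis
    qed
  qed
qed

definition join_pt :: "real \<Rightarrow> real set \<Rightarrow> real \<Rightarrow> (real \<Rightarrow> real) \<Rightarrow> real \<Rightarrow> real" where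
  "join_pt w V a y = (\<lambda>q\<in>P. if q = w then a else if q \<in> V then (1 - a) * y q else 0)"

lemma separated_join_pt:
  assumes "V \<subseteq> P" "\<And>q. q \<in> V \<Longrightarrow> r < dist q w" "a \<noteq> 1 \<Longrightarrow> separated r V y"
  shows "separated r P (join_pt w V a y)"
  unfolding separated_def
proof (intro ballI impI)
  fix c d assume cd: "c \<in> P" "d \<in> P" "c \<noteq> d \<and> dist c d \<le> r"
  show "join_pt w V a y c = 0 \<or> join_pt w V a y d = 0"
  proof (cases "c = w \<or> d = w")
    case True
    then show ?thesis
      using cd assms(2)[of c] assms(2)[of d] by (auto simp: join_pt_def dist_commute)
  next
    case False
    have "y c = 0 \<or> y d = 0" if "a \<noteq> 1" "c \<in> V" "d \<in> V"
      using assms(3)[OF that(1)] cd that(2,3) unfolding separated_def by blast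
    then show ?thesis
      using False cd by (auto simp: join_pt_def)
  qed
qed

lemma join_pt_in_T:
  assumes w: "w \<in> P" and V: "V \<subseteq> P" "w \<notin> V" and far: "\<And>q. q \<in> V \<Longrightarrow> r < dist q w"
    and a: "0 \<le> a" "a \<le> 1" and y: "a < 1 \<Longrightarrow> y \<in> anti_rips_points r V"
  shows "join_pt w V a y \<in> T"
proof -
  let ?z = "join_pt w V a y"
  have y_nonneg: "a \<noteq> 1 \<Longrightarrow> q \<in> V \<Longrightarrow> 0 \<le> y q" for q
    using y a(2) by (auto simp: anti_rips_points_def)
  have "sum ?z P = (\<Sum>q\<in>P. (if q = w then a else 0) + (if q \<in> V then (1 - a) * y q else 0))"
    using V by (intro sum.cong) (auto simp: join_pt_def)
  also have "\<dots> = a + (\<Sum>q\<in>V. (1 - a) * y q)"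
    using w V finite_P by (simp add: sum.distrib sum.inter_restrict[symmetric] inf.absorb2)
  also have "(\<Sum>q\<in>V. (1 - a) * y q) = 1 - a"
    using y a(2) by (cases "a = 1") (auto simp: anti_rips_points_def simp flip: sum_distrib_left)
  finally have "sum ?z P = 1"
    by simp
  moreover have "separated r P ?z"
    using V far y a(2) by (intro separated_join_pt) (auto simp: anti_rips_points_def)
  moreover have "0 \<le> ?z q" if "q \<in> P" for q
    using a y_nonneg[of q] that by (cases "a = 1") (auto simp: join_pt_def)
  ultimately show ?thesis
    by (simp add: anti_rips_points_def join_pt_def)
qed

lemma sum_far_of_vertex:
  assumes x: "x \<in> T" and p: "p \<in> P"
    and rest: "\<And>q. q \<in> P \<Longrightarrow> q \<noteq> p \<Longrightarrow> q \<notin> far p \<Longrightarrow> x q = 0"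
  shows "sum x (far p) = 1 - x p"
proof -
  have "1 = sum x P"
    using x by (simp add: anti_rips_points_def)
  also have "\<dots> = (\<Sum>q\<in>P. (if q = p then x q else 0) + (if q \<in> far p then x q else 0))"
    using rest notin_far_self by (intro sum.cong) auto
  also have "\<dots> = x p + sum x (far p)"
    using finite_P p far_subset by (simp add: sum.distrib sum.inter_restrict[symmetric] inf.absorb2)
  finally show ?thesis
    by simp
qed

lemma rescaled_far_in_anti_rips_points:
  assumes x: "x \<in> T" and sum_far: "sum x (far p) = 1 - s" and "s < 1"
  shows "(\<lambda>q\<in>far p. x q / (1 - s)) \<in> anti_rips_points r (far p)"
proof -
  have "0 \<le> x q" if "q \<in> far p" for q
    using T_nonneg[OF x] far_subset that by blast
  then have "\<forall>q\<in>far p. 0 \<le> x q / (1 - s)"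
    using \<open>s < 1\<close> by simp
  moreover have "(\<Sum>q\<in>far p. x q / (1 - s)) = 1"
    using sum_far \<open>s < 1\<close> by (simp add: sum_divide_distrib[symmetric])
  moreover have "separated r P x"
    using x by (simp add: anti_rips_points_def)
  then have "separated r (far p) (\<lambda>q\<in>far p. x q / (1 - s))"
    using far_subset unfolding separated_def by auto
  ultimately show ?thesis
    by (simp add: anti_rips_points_def)
qed

lemma T_eq_join_pt:
  assumes x: "x \<in> T" and p: "p \<in> P"
    and rest: "\<And>q. q \<in> P \<Longrightarrow> q \<noteq> p \<Longrightarrow> q \<notin> far p \<Longrightarrow> x q = 0"
  obtains y where "x p < 1 \<Longrightarrow> y \<in> anti_rips_points r (far p)" "x = join_pt p (far p) (x p) y"
proof -
  define s where "s = x p"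
  define y where "y = (\<lambda>q\<in>far p. x q / (1 - s))"
  have sum_far: "sum x (far p) = 1 - s"
    using sum_far_of_vertex[OF x p rest] by (simp add: s_def)
  have "s < 1 \<Longrightarrow> y \<in> anti_rips_points r (far p)"
    using rescaled_far_in_anti_rips_points[OF x sum_far] by (simp add: y_def)
  moreover have "x = join_pt p (far p) s y"
  proof (rule extensionalityI)
    show "x \<in> extensional P" "join_pt p (far p) s y \<in> extensional P"
      using x by (auto simp: anti_rips_points_def join_pt_def)
  next
    fix q assume q: "q \<in> P"
    have "x q = 0" if "s = 1" "q \<in> far p"
    proof -
      have "\<forall>q\<in>far p. 0 \<le> x q"
        using T_nonneg[OF x] far_subset by blast
      then show ?thesis
        using sum_far that sum_nonneg_eq_0_iff[OF finite_far] by auto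
    qed
    then show "x q = join_pt p (far p) s y q"
      using q rest[OF q] notin_far_self by (cases "s = 1") (auto simp: join_pt_def y_def s_def)
  qed
  ultimately show ?thesis
    unfolding s_def by (rule that)
qed

definition realization :: "(real \<Rightarrow> real) topology" where
  "realization = geom_realization P (anti_rips r P)"

definition far_realization :: "real \<Rightarrow> (real \<Rightarrow> real) topology" where
  "far_realization p = geom_realization (far p) (anti_rips r (far p))"

definition far_susp :: "real \<Rightarrow> (real \<Rightarrow> real) susp topology" where
  "far_susp p = suspension (far_realization p)"

definition wedge_space :: "(real \<times> (real \<Rightarrow> real) susp) option topology" where
  "wedge_space = wedge far_susp (\<lambda>p. North) N"

definition wedge_quot :: "real \<times> (real \<Rightarrow> real) susp \<Rightarrow> (real \<times> (real \<Rightarrow> real) susp) option" where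
  "wedge_quot = (\<lambda>(p, z). if z = North then None else Some (p, z))"

definition zero_pt :: "real \<Rightarrow> real" where
  "zero_pt = (\<lambda>q\<in>P. 0)"

definition susp_pt :: "real \<Rightarrow> real \<Rightarrow> (real \<Rightarrow> real) \<Rightarrow> real \<Rightarrow> real" where
  "susp_pt p s y = (\<lambda>q\<in>P. if q = p then s else if q \<in> far p then s * (1 - s) * y q else 0)"

text \<open>North is the base point of the wedge and Mid y t lies at height s = (1 - t)/2; at South
  (height 1) the factor s (1 - s) of susp_pt vanishes, so no y is needed.\<close>

definition embed_susp :: "real \<Rightarrow> (real \<Rightarrow> real) susp \<Rightarrow> real \<Rightarrow> real" where
  "embed_susp p z = (case z of North \<Rightarrow> zero_pt | South \<Rightarrow> susp_pt p 1 undefined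
     | Mid y t \<Rightarrow> susp_pt p ((1 - t) / 2) y)"

definition embed_wedge :: "(real \<times> (real \<Rightarrow> real) susp) option \<Rightarrow> real \<Rightarrow> real" where
  "embed_wedge w = (case w of None \<Rightarrow> zero_pt | Some (p, z) \<Rightarrow> embed_susp p z)"

definition wedge_image :: "(real \<Rightarrow> real) set" where
  "wedge_image = embed_wedge ` topspace wedge_space"

definition embedded_wedge :: "(real \<Rightarrow> real) topology" where
  "embedded_wedge = subtopology (powertop_real P) wedge_image"

lemma realization_eq: "realization = subtopology (powertop_real P) T"
  by (simp add: realization_def geom_realization_anti_rips finite_P)

lemma topspace_realization: "topspace realization = T"
  by (simp add: realization_def topspace_geom_realization_anti_rips finite_P)

lemma topspace_far_realization: "topspace (far_realization p) = anti_rips_points r (far p)"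
  by (simp add: far_realization_def topspace_geom_realization_anti_rips finite_far)

lemma far_susp_eq:
  "far_susp p = quotient_topology (prod_topology (far_realization p) (top_of_set {-1..1})) susp_map
     ({North, South} \<union> susp_map ` (anti_rips_points r (far p) \<times> {-1..1}))"
  by (simp add: far_susp_def suspension_def topspace_far_realization)

lemma topspace_far_susp:
  "topspace (far_susp p) = {North, South} \<union> susp_map ` (anti_rips_points r (far p) \<times> {-1..1})"
  unfolding far_susp_eq by (rule topspace_quotient_topology) (auto simp: topspace_far_realization)

lemma wedge_space_eq:
  "wedge_space = quotient_topology (sum_topology far_susp N) wedge_quot
     (insert None (wedge_quot ` topspace (sum_topology far_susp N)))"
  by (simp add: wedge_space_def wedge_def wedge_quot_def)

lemma topspace_wedge_space:
  "topspace wedge_space = insert None (wedge_quot ` Sigma N (topspace \<circ> far_susp))"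
  by (subst wedge_space_eq, subst topspace_quotient_topology) auto

lemma susp_pt_0: "susp_pt p 0 y = zero_pt"
  by (auto simp: susp_pt_def zero_pt_def)

lemma susp_pt_1: "susp_pt p 1 y = susp_pt p 1 y'"
  by (auto simp: susp_pt_def)

lemma embed_susp_susp_map:
  "t \<in> {-1..1} \<Longrightarrow> embed_susp p (susp_map (y, t)) = susp_pt p ((1 - t) / 2) y"
  by (auto simp: susp_map_def embed_susp_def susp_pt_0 intro: susp_pt_1)

lemma embed_wedge_simps:
  "embed_wedge None = zero_pt"
  "embed_wedge (Some (p, South)) = susp_pt p 1 undefined"
  "embed_wedge (Some (p, Mid y t)) = susp_pt p ((1 - t) / 2) y"
  "embed_wedge (wedge_quot (p, z)) = embed_susp p z"
  by (auto simp: embed_wedge_def embed_susp_def wedge_quot_def)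

lemma wedge_space_cases:
  assumes "w \<in> topspace wedge_space"
  obtains "w = None"
  | p s y where "p \<in> N" "0 < s" "s \<le> 1" "s < 1 \<Longrightarrow> y \<in> anti_rips_points r (far p)"
      "w = Some (p, if s = 1 then South else Mid y (1 - 2 * s))" "embed_wedge w = susp_pt p s y"
proof -
  consider "w = None" | p z where "p \<in> N" "z \<in> topspace (far_susp p)" "w = wedge_quot (p, z)"
    using assms by (auto simp: topspace_wedge_space)
  then show ?thesis
  proof cases
    case (2 p z)
    then consider "z = North" | "z = South"
      | y t where "y \<in> anti_rips_points r (far p)" "-1 < t" "t < 1" "z = Mid y t"
      by (auto simp: topspace_far_susp susp_map_def split: if_splits)
    then show ?thesis
    proof cases
      case 1
      then show ?thesis
        using 2 that(1) by (simp add: wedge_quot_def)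
    next
      case 2
      then show ?thesis
        using \<open>p \<in> N\<close> \<open>w = wedge_quot (p, z)\<close> that(2)[of p 1 undefined]
        by (simp add: wedge_quot_def embed_wedge_simps)
    next
      case (3 y t)
      have "1 - 2 * ((1 - t) / 2) = t"
        by (simp add: field_simps)
      then show ?thesis
        using 3 \<open>p \<in> N\<close> \<open>w = wedge_quot (p, z)\<close> that(2)[of p "(1 - t) / 2" y]
        by (simp add: wedge_quot_def embed_wedge_simps)
    qed
  qed (use that in blast)
qed

lemma zero_pt_in_wedge_image: "zero_pt \<in> wedge_image"
  unfolding wedge_image_def topspace_wedge_space
  by (rule image_eqI[of _ _ None]) (auto simp: embed_wedge_simps)

lemma susp_pt_in_wedge_image:
  assumes "p \<in> N" "0 \<le> s" "s \<le> 1" "s < 1 \<Longrightarrow> y \<in> anti_rips_points r (far p)"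
  shows "susp_pt p s y \<in> wedge_image"
proof -
  obtain z where z: "z \<in> topspace (far_susp p)" and embed: "embed_susp p z = susp_pt p s y"
  proof (cases "s = 1")
    case True
    then show ?thesis
      using that[of South] by (auto simp: topspace_far_susp embed_susp_def intro: susp_pt_1)
  next
    case False
    then show ?thesis
      using that[of "susp_map (y, 1 - 2 * s)"] assms by (auto simp: topspace_far_susp embed_susp_susp_map)
  qed
  have "wedge_quot (p, z) \<in> topspace wedge_space"
    using assms(1) z by (auto simp: topspace_wedge_space)
  then show ?thesis
    using embed unfolding wedge_image_def by (metis embed_wedge_simps(4) image_eqI)
qed

lemma wedge_image_cases:
  assumes "v \<in> wedge_image"
  obtains "v = zero_pt"
  | p s y where "p \<in> N" "0 < s" "s \<le> 1" "s < 1 \<Longrightarrow> y \<in> anti_rips_points r (far p)"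
      "v = susp_pt p s y"
proof -
  obtain w where w: "w \<in> topspace wedge_space" "v = embed_wedge w"
    using assms by (auto simp: wedge_image_def)
  then show ?thesis
    by (cases rule: wedge_space_cases) (use that in \<open>auto simp: embed_wedge_simps\<close>)
qed

lemma wedge_image_subset: "wedge_image \<subseteq> extensional P"
  by (auto elim!: wedge_image_cases simp: zero_pt_def susp_pt_def)

lemma topspace_embedded_wedge: "topspace embedded_wedge = wedge_image"
  using wedge_image_subset by (auto simp: embedded_wedge_def PiE_def)

lemma susp_pt_N: "p \<in> N \<Longrightarrow> q \<in> N \<Longrightarrow> susp_pt p s y q = (if q = p then s else 0)"
  using N_subset N_disjoint_far by (auto simp: susp_pt_def)

lemma susp_pt_m: "p \<in> N \<Longrightarrow> susp_pt p s y m = 0"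
  using m_in_P m_notin_N m_notin_far by (auto simp: susp_pt_def)

lemma susp_pt_far_m:
  "p \<in> N \<Longrightarrow> q \<in> far m \<Longrightarrow> susp_pt p s y q = (if q \<in> far p then s * (1 - s) * y q else 0)"
  using far_subset far_m_disjoint_N by (auto simp: susp_pt_def)

lemma near_mass_susp_pt: "p \<in> N \<Longrightarrow> near_mass (susp_pt p s y) = s"
  by (subst near_mass_single[of p]) (auto simp: susp_pt_N)

lemma near_mass_zero_pt: "near_mass zero_pt = 0"
  using N_subset by (intro near_mass_zero) (auto simp: zero_pt_def)

lemma wedge_image_far_coord:
  assumes v: "v \<in> wedge_image" and q: "q \<in> far m"
  shows "0 \<le> v q \<and> v q \<le> near_mass v"
  using v
proof (cases rule: wedge_image_cases)
  case 1
  then show ?thesis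
    using q far_subset by (simp add: near_mass_zero_pt) (auto simp: zero_pt_def)
next
  case (2 p s y)
  have "0 \<le> y q \<and> y q \<le> 1" if "s < 1" "q \<in> far p"
    using 2 that anti_rips_points_le_1[of y r "far p" q] finite_far
    by (auto simp: anti_rips_points_def)
  then have "0 \<le> s * (1 - s) * y q \<and> s * (1 - s) * y q \<le> s" if "q \<in> far p"
    using 2 that mult_le_one[of "1 - s" "y q"]
    by (cases "s = 1") (auto simp: mult_left_le)
  then show ?thesis
    using 2 q by (simp add: susp_pt_far_m near_mass_susp_pt)
qed

definition collapse :: "(real \<Rightarrow> real) \<Rightarrow> real \<Rightarrow> real" where
  "collapse x = (\<lambda>q\<in>P. if q \<in> N then x q else if q = m then 0 else near_mass x * x q)"

lemma collapse_vanishing_near: "(\<And>q. q \<in> N \<Longrightarrow> x q = 0) \<Longrightarrow> collapse x = zero_pt"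
  using near_mass_zero[of x] by (auto simp: collapse_def zero_pt_def)

lemma collapse_join_pt_m: "(\<And>q. q \<in> V \<Longrightarrow> q \<notin> N) \<Longrightarrow> collapse (join_pt m V a y) = zero_pt"
  using m_notin_N N_subset by (intro collapse_vanishing_near) (auto simp: join_pt_def)

lemma collapse_join_pt:
  assumes p: "p \<in> N"
  shows "collapse (join_pt p (far p) s y) = susp_pt p s y"
proof (rule ext_eqI)
  have mass: "near_mass (join_pt p (far p) s y) = s"
    using p N_subset N_disjoint_far by (subst near_mass_single[of p]) (auto simp: join_pt_def)
  show "collapse (join_pt p (far p) s y) m = susp_pt p s y m"
    using p m_in_P m_notin_N by (simp add: collapse_def susp_pt_m)
  show "collapse (join_pt p (far p) s y) q = susp_pt p s y q" if "q \<in> N" for q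
  proof -
    have "p \<in> P" "q \<in> P" "q \<notin> far p"
      using p that N_subset N_disjoint_far by auto
    then show ?thesis
      using p that by (simp add: collapse_def join_pt_def susp_pt_N)
  qed
  show "collapse (join_pt p (far p) s y) q = susp_pt p s y q" if "q \<in> far m" for q
  proof -
    have "q \<in> P" "q \<noteq> p" "q \<noteq> m" "q \<notin> N"
      using that p far_subset far_m_disjoint_N notin_far_self by auto
    then show ?thesis
      using p that by (simp add: collapse_def mass) (simp add: join_pt_def susp_pt_far_m)
  qed
qed (auto simp: collapse_def susp_pt_def)

lemma collapse_in_wedge_image:
  assumes x: "x \<in> T"
  shows "collapse x \<in> wedge_image"
  using x
proof (cases rule: T_near_cases)
  case 1
  then show ?thesis
    by (simp add: collapse_vanishing_near zero_pt_in_wedge_image)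
next
  case (2 p)
  then have "p \<in> P"
    using N_subset by blast
  obtain y where y: "x p < 1 \<Longrightarrow> y \<in> anti_rips_points r (far p)"
      and x_eq: "x = join_pt p (far p) (x p) y"
    using T_eq_join_pt[OF x \<open>p \<in> P\<close>] 2(3) by blast
  have "x p \<le> 1"
    using x \<open>p \<in> P\<close> finite_P anti_rips_points_le_1 by blast
  then show ?thesis
    using 2 y by (subst x_eq) (auto simp: collapse_join_pt intro!: susp_pt_in_wedge_image)
qed

text \<open>For both s \<le> 1/2 and s \<ge> 1/2 the denominator undoes the factor s (1 - s) of susp_pt p s y.\<close>

definition expand :: "(real \<Rightarrow> real) \<Rightarrow> real \<Rightarrow> real" where
  "expand v = (\<lambda>q\<in>P. if q = m then max 0 (1 - 2 * near_mass v)
     else if q \<in> N then max 0 (2 * v q - 1)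
     else v q / (max (near_mass v) (1/2) * (1 - min (near_mass v) (1/2))))"

lemma expand_zero_pt: "expand zero_pt = join_pt m {} 1 y"
proof (rule ext_eqI)
  show "expand zero_pt m = join_pt m {} 1 y m"
    using m_in_P by (simp add: expand_def join_pt_def near_mass_zero_pt)
  show "expand zero_pt q = join_pt m {} 1 y q" if "q \<in> N" for q
    using that N_subset m_notin_N by (auto simp: expand_def join_pt_def zero_pt_def)
  show "expand zero_pt q = join_pt m {} 1 y q" if "q \<in> far m" for q
    using that far_subset notin_far_self far_m_disjoint_N
    by (auto simp: expand_def join_pt_def zero_pt_def)
qed (auto simp: expand_def join_pt_def)

lemma expand_susp_pt_m: "p \<in> N \<Longrightarrow> expand (susp_pt p s y) m = max 0 (1 - 2 * s)"
  using m_in_P by (simp add: expand_def near_mass_susp_pt)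

lemma expand_susp_pt_N:
  "p \<in> N \<Longrightarrow> q \<in> N \<Longrightarrow> expand (susp_pt p s y) q = (if q = p then max 0 (2 * s - 1) else 0)"
  using N_subset m_notin_N by (auto simp: expand_def susp_pt_N)

lemma expand_susp_pt_far_m:
  assumes "p \<in> N" "q \<in> far m"
  shows "expand (susp_pt p s y) q =
    (if q \<in> far p then s * (1 - s) * y q / (max s (1/2) * (1 - min s (1/2))) else 0)"
proof -
  have "q \<in> P" "q \<noteq> m" "q \<notin> N"
    using assms far_subset notin_far_self far_m_disjoint_N by auto
  then show ?thesis
    using assms by (simp add: expand_def near_mass_susp_pt susp_pt_far_m)
qed

lemma expand_susp_pt_low:
  assumes p: "p \<in> N" and s: "0 \<le> s" "s \<le> 1/2"
  shows "expand (susp_pt p s y) = join_pt m (far p) (1 - 2 * s) y"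
proof (rule ext_eqI)
  show "expand (susp_pt p s y) m = join_pt m (far p) (1 - 2 * s) y m"
    using p s m_in_P by (simp add: expand_susp_pt_m join_pt_def)
  show "expand (susp_pt p s y) q = join_pt m (far p) (1 - 2 * s) y q" if "q \<in> N" for q
    using p s that N_subset m_notin_N N_disjoint_far by (auto simp: expand_susp_pt_N join_pt_def)
  show "expand (susp_pt p s y) q = join_pt m (far p) (1 - 2 * s) y q" if "q \<in> far m" for q
  proof -
    have "min s (1/2) = s" "max s (1/2) = 1/2"
      using s by auto
    moreover have "q \<in> P" "q \<noteq> m"
      using that far_subset notin_far_self by auto
    ultimately show ?thesis
      using p s that by (auto simp: expand_susp_pt_far_m join_pt_def)
  qed
qed (auto simp: expand_def join_pt_def)

lemma expand_susp_pt_high: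
  assumes p: "p \<in> N" and s: "1/2 \<le> s" "s \<le> 1"
  shows "expand (susp_pt p s y) = join_pt p (far p) (2 * s - 1) y"
proof (rule ext_eqI)
  show "expand (susp_pt p s y) m = join_pt p (far p) (2 * s - 1) y m"
    using p s m_in_P m_notin_N m_notin_far by (auto simp: expand_susp_pt_m join_pt_def)
  show "expand (susp_pt p s y) q = join_pt p (far p) (2 * s - 1) y q" if "q \<in> N" for q
    using p s that N_subset N_disjoint_far by (auto simp: expand_susp_pt_N join_pt_def)
  show "expand (susp_pt p s y) q = join_pt p (far p) (2 * s - 1) y q" if "q \<in> far m" for q
  proof -
    have "min s (1/2) = 1/2" "max s (1/2) = s"
      using s by auto
    moreover have "q \<in> P" "q \<noteq> p"
      using that p far_subset far_m_disjoint_N by auto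
    ultimately show ?thesis
      using p s that by (auto simp: expand_susp_pt_far_m join_pt_def)
  qed
qed (auto simp: expand_def join_pt_def)

lemma expand_in_T:
  assumes v: "v \<in> wedge_image"
  shows "expand v \<in> T"
  using v
proof (cases rule: wedge_image_cases)
  case 1
  then show ?thesis
    using m_in_P by (auto simp: expand_zero_pt[of undefined] intro!: join_pt_in_T)
next
  case (2 p s y)
  have "p \<in> P" "far p \<subseteq> P"
    using 2 N_subset far_subset by auto
  show ?thesis
  proof (cases "s \<le> 1/2")
    case True
    have "r < dist q m" if "q \<in> far p" for q
      using 2 that far_subset_far_m dist_far by blast
    moreover have "y \<in> anti_rips_points r (far p)"
      using 2 True by simp
    ultimately show ?thesis
      using 2 True m_in_P far_subset m_notin_far
      by (auto simp: expand_susp_pt_low intro!: join_pt_in_T)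
  next
    case False
    then show ?thesis
      using 2 \<open>p \<in> P\<close> far_subset notin_far_self dist_far
      by (auto simp: expand_susp_pt_high intro!: join_pt_in_T)
  qed
qed

definition lower :: "real \<Rightarrow> real \<Rightarrow> real" where
  "lower \<tau> s = max 0 (s - \<tau>) / (1 - \<tau>)"

lemma lower_nonneg: "\<tau> < 1 \<Longrightarrow> 0 \<le> lower \<tau> s"
  by (simp add: lower_def)

lemma lower_le_1: "0 \<le> \<tau> \<Longrightarrow> \<tau> < 1 \<Longrightarrow> s \<le> 1 \<Longrightarrow> lower \<tau> s \<le> 1"
  by (simp add: lower_def)

lemma lower_eq_0: "s \<le> \<tau> \<Longrightarrow> lower \<tau> s = 0"
  by (simp add: lower_def)

lemma lower_0: "0 \<le> s \<Longrightarrow> lower 0 s = s"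
  by (simp add: lower_def)

lemma lower_1: "\<tau> < 1 \<Longrightarrow> lower \<tau> 1 = 1"
  by (simp add: lower_def)

lemma lower_half: "lower (1/2) s = max 0 (2 * s - 1)"
  by (simp add: lower_def max_def)

lemma sum_lower_N:
  assumes x: "x \<in> T" and \<tau>: "0 \<le> \<tau>"
  shows "(\<Sum>q\<in>N. lower \<tau> (x q)) = lower \<tau> (near_mass x)"
  using x
proof (cases rule: T_near_cases)
  case 1
  then show ?thesis
    using \<tau> by (simp add: near_mass_zero lower_eq_0)
next
  case (2 p)
  have "x q = 0" if "q \<in> N" "q \<noteq> p" for q
    using 2 that N_subset N_disjoint_far by blast
  then have "(\<Sum>q\<in>N. lower \<tau> (x q)) = lower \<tau> (x p)" and "near_mass x = x p"
    using 2 \<tau> finite_N by (auto simp: sum.remove[of _ p] lower_eq_0 intro!: sum.neutral near_mass_single)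
  then show ?thesis
    by simp
qed

text \<open>Interpolates between the identity (\<tau> = 0) and expand \<circ> collapse (\<tau> = 1/2): the weights
  on N are lowered as in expand, the weight 2 (\<tau> - removed \<tau> x) on m interpolates
  max 0 (1 - 2 near_mass x), and far_factor renormalises the total weight to 1.\<close>

definition removed :: "real \<Rightarrow> (real \<Rightarrow> real) \<Rightarrow> real" where
  "removed \<tau> x = min (near_mass x) \<tau>"

definition far_factor :: "real \<Rightarrow> (real \<Rightarrow> real) \<Rightarrow> real" where
  "far_factor \<tau> x = (1 - 2 * \<tau> + 2 * removed \<tau> x) / (1 - removed \<tau> x)"

definition deform_realization :: "real \<Rightarrow> (real \<Rightarrow> real) \<Rightarrow> real \<Rightarrow> real" where
  "deform_realization \<tau> x = (\<lambda>q\<in>P. if q = m then 2 * (\<tau> - removed \<tau> x) + far_factor \<tau> x * x q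
     else if q \<in> N then lower \<tau> (x q) else far_factor \<tau> x * x q)"

lemma deform_realization_m:
  "deform_realization \<tau> x m = 2 * (\<tau> - removed \<tau> x) + far_factor \<tau> x * x m"
  using m_in_P by (simp add: deform_realization_def)

lemma deform_realization_N: "q \<in> N \<Longrightarrow> deform_realization \<tau> x q = lower \<tau> (x q)"
  using N_subset m_notin_N by (auto simp: deform_realization_def)

lemma deform_realization_far_m: "q \<in> far m \<Longrightarrow> deform_realization \<tau> x q = far_factor \<tau> x * x q"
  using far_subset far_m_disjoint_N notin_far_self by (auto simp: deform_realization_def)

lemma removed_far_factor_bounds:
  assumes "x \<in> T" "0 \<le> \<tau>" "\<tau> \<le> 1/2"
  shows "0 \<le> removed \<tau> x" "removed \<tau> x \<le> \<tau>" "0 \<le> far_factor \<tau> x"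
  using assms near_mass_nonneg[of x] by (auto simp: removed_def far_factor_def)

lemma sum_deform_realization:
  assumes x: "x \<in> T" and \<tau>: "0 \<le> \<tau>" "\<tau> \<le> 1/2"
  shows "sum (deform_realization \<tau> x) P = 1"
proof -
  define \<sigma> where "\<sigma> = near_mass x"
  have "sum (deform_realization \<tau> x) N = lower \<tau> \<sigma>"
    using x \<tau> by (simp add: deform_realization_N sum_lower_N \<sigma>_def)
  moreover have "sum (deform_realization \<tau> x) (far m) = far_factor \<tau> x * sum x (far m)"
    by (simp add: deform_realization_far_m sum_distrib_left)
  ultimately have "sum (deform_realization \<tau> x) P =
      2 * (\<tau> - removed \<tau> x) + far_factor \<tau> x * (x m + sum x (far m)) + lower \<tau> \<sigma>"
    by (simp add: sum_P_split deform_realization_m algebra_simps)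
  also have "x m + sum x (far m) = 1 - \<sigma>"
    using sum_T[OF x] by (simp add: \<sigma>_def)
  also have "2 * (\<tau> - removed \<tau> x) + far_factor \<tau> x * (1 - \<sigma>) + lower \<tau> \<sigma> = 1"
  proof (cases "\<sigma> \<le> \<tau>")
    case True
    then show ?thesis
      using \<tau> by (simp add: removed_def far_factor_def lower_eq_0 \<sigma>_def[symmetric])
  next
    case False
    then show ?thesis
      using \<tau> by (simp add: removed_def far_factor_def lower_def \<sigma>_def[symmetric] field_simps)
  qed
  finally show ?thesis .
qed

lemma separated_deform_realization:
  assumes x: "x \<in> T" and \<tau>: "0 \<le> \<tau>" "\<tau> \<le> 1/2"
  shows "separated r P (deform_realization \<tau> x)"
proof (rule separated_by_support)
  show "separated r P x"
    using x by (simp add: anti_rips_points_def)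
  show "q = m \<or> x q \<noteq> 0" if "q \<in> P" "deform_realization \<tau> x q \<noteq> 0" for q
    using that P_cases[of q] \<tau>
    by (auto simp: deform_realization_N deform_realization_far_m lower_def)
  show "\<forall>q\<in>N. deform_realization \<tau> x q = 0" if m: "deform_realization \<tau> x m \<noteq> 0"
  proof
    fix q assume q: "q \<in> N"
    show "deform_realization \<tau> x q = 0"
    proof (cases "x m = 0")
      case True
      then have "near_mass x < \<tau>"
        using m by (auto simp: deform_realization_m removed_def)
      then show ?thesis
        using le_near_mass[OF x q] q by (simp add: deform_realization_N lower_eq_0)
    next
      case False
      then show ?thesis
        using T_m_vanishes_on_N[OF x False q] q \<tau> by (simp add: deform_realization_N lower_eq_0)
    qed
  qed
qed

lemma deform_realization_in_T:
  assumes x: "x \<in> T" and \<tau>: "0 \<le> \<tau>" "\<tau> \<le> 1/2"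
  shows "deform_realization \<tau> x \<in> T"
proof -
  have "0 \<le> deform_realization \<tau> x q" if "q \<in> P" for q
    using P_cases[OF that] removed_far_factor_bounds[OF x \<tau>] T_nonneg[OF x that] \<tau>
    by (auto simp: deform_realization_m deform_realization_N deform_realization_far_m lower_nonneg)
  then show ?thesis
    using sum_deform_realization[OF assms] separated_deform_realization[OF assms]
    by (simp add: anti_rips_points_def deform_realization_def)
qed

lemma deform_realization_0:
  assumes x: "x \<in> T"
  shows "deform_realization 0 x = x"
proof (rule ext_eqI)
  have "removed 0 x = 0" "far_factor 0 x = 1"
    using near_mass_nonneg[OF x] by (auto simp: removed_def far_factor_def)
  then show "deform_realization 0 x m = x m" "\<And>q. q \<in> far m \<Longrightarrow> deform_realization 0 x q = x q"
    by (simp_all add: deform_realization_m deform_realization_far_m)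
  show "deform_realization 0 x q = x q" if "q \<in> N" for q
    using that T_nonneg[OF x] N_subset by (auto simp: deform_realization_N lower_0)
qed (use x in \<open>auto simp: deform_realization_def anti_rips_points_def\<close>)

lemma deform_realization_half:
  assumes x: "x \<in> T"
  shows "deform_realization (1/2) x = expand (collapse x)"
proof (rule ext_eqI)
  have mass: "near_mass (collapse x) = near_mass x"
    using N_subset by (intro near_mass_cong) (auto simp: collapse_def)
  have "far_factor (1/2) x * x m = 0"
  proof (cases "x m = 0")
    case False
    then have "near_mass x = 0"
      using T_m_vanishes_on_N[OF x] by (intro near_mass_zero)
    then show ?thesis
      by (simp add: far_factor_def removed_def)
  qed simp
  moreover have "1 - 2 * min (near_mass x) (1/2) = max 0 (1 - 2 * near_mass x)"
    by (simp add: min_def max_def)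
  ultimately show "deform_realization (1/2) x m = expand (collapse x) m"
    using m_in_P by (simp add: deform_realization_m expand_def mass removed_def)
  show "deform_realization (1/2) x q = expand (collapse x) q" if "q \<in> N" for q
  proof -
    have "q \<in> P" "q \<noteq> m"
      using that N_subset m_notin_N by auto
    then show ?thesis
      using that by (simp add: deform_realization_N lower_half expand_def collapse_def)
  qed
  show "deform_realization (1/2) x q = expand (collapse x) q" if q: "q \<in> far m" for q
  proof -
    have "q \<in> P" "q \<noteq> m" "q \<notin> N"
      using q far_subset far_m_disjoint_N notin_far_self by auto
    moreover have "far_factor (1/2) x =
        near_mass x / (max (near_mass x) (1/2) * (1 - min (near_mass x) (1/2)))"
      using near_mass_nonneg[OF x]
      by (cases "near_mass x \<le> 1/2") (auto simp: far_factor_def removed_def field_simps)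
    ultimately show ?thesis
      by (simp add: deform_realization_far_m q expand_def mass) (simp add: collapse_def)
  qed
qed (auto simp: deform_realization_def expand_def)

text \<open>Rescales a far coordinate s (1 - s) y q of susp_pt p s y to the corresponding coordinate
  of susp_pt p (lower \<tau> s) y, without dividing by 1 - s.\<close>

definition far_rescale :: "real \<Rightarrow> real \<Rightarrow> real \<Rightarrow> real" where
  "far_rescale \<tau> s z = z * max 0 (s - \<tau>) / (s * (1 - \<tau>)\<^sup>2)"

lemma far_rescale_susp_pt:
  assumes "0 < s" "\<tau> < 1"
  shows "far_rescale \<tau> s (s * (1 - s) * c) = lower \<tau> s * (1 - lower \<tau> s) * c"
proof (cases "s \<le> \<tau>")
  case False
  define d where "d = 1 - \<tau>"
  have d: "d \<noteq> 0" and \<tau>_eq: "\<tau> = 1 - d"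
    using assms by (auto simp: d_def)
  show ?thesis
    using False assms d unfolding \<tau>_eq
    by (simp add: far_rescale_def lower_def field_simps power2_eq_square)
qed (simp add: far_rescale_def lower_def)

lemma abs_far_rescale_le:
  assumes "0 \<le> \<tau>" "\<tau> \<le> 1/2" "0 \<le> z" "z \<le> s"
  shows "\<bar>far_rescale \<tau> s z\<bar> \<le> 4 * z"
proof (cases "s = 0")
  case False
  then have s: "0 < s"
    using assms by simp
  have d: "1/4 \<le> (1 - \<tau>)\<^sup>2"
    using assms power_mono[of "1/2" "1 - \<tau>" 2] by (simp add: power2_eq_square)
  have "0 \<le> far_rescale \<tau> s z"
    using assms s by (simp add: far_rescale_def)
  moreover have "far_rescale \<tau> s z \<le> z * s / (s * (1 - \<tau>)\<^sup>2)"
    using assms s unfolding far_rescale_def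
    by (intro divide_right_mono mult_left_mono) auto
  moreover have "z * s / (s * (1 - \<tau>)\<^sup>2) = z / (1 - \<tau>)\<^sup>2"
    using s by simp
  moreover have "z / (1 - \<tau>)\<^sup>2 \<le> 4 * z"
  proof -
    have "z \<le> z * (4 * (1 - \<tau>)\<^sup>2)"
      using d assms mult_left_mono[of 1 "4 * (1 - \<tau>)\<^sup>2" z] by simp
    moreover have "0 < (1 - \<tau>)\<^sup>2"
      using assms by simp
    ultimately show ?thesis
      by (simp add: divide_le_eq algebra_simps)
  qed
  ultimately show ?thesis
    by simp
qed (use assms in \<open>simp add: far_rescale_def\<close>)

definition deform_image :: "real \<Rightarrow> (real \<Rightarrow> real) \<Rightarrow> real \<Rightarrow> real" where
  "deform_image \<tau> v = (\<lambda>q\<in>P. if q = m then 0 else if q \<in> N then lower \<tau> (v q)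
     else far_rescale \<tau> (near_mass v) (v q))"

lemma deform_image_zero_pt: "0 \<le> \<tau> \<Longrightarrow> deform_image \<tau> zero_pt = zero_pt"
  by (auto simp: deform_image_def zero_pt_def lower_eq_0 far_rescale_def)

lemma deform_image_susp_pt:
  assumes p: "p \<in> N" and s: "0 < s" "s \<le> 1" and \<tau>: "0 \<le> \<tau>" "\<tau> < 1"
  shows "deform_image \<tau> (susp_pt p s y) = susp_pt p (lower \<tau> s) y"
proof (rule ext_eqI)
  show "deform_image \<tau> (susp_pt p s y) m = susp_pt p (lower \<tau> s) y m"
    using p m_in_P by (simp add: deform_image_def susp_pt_m)
  show "deform_image \<tau> (susp_pt p s y) q = susp_pt p (lower \<tau> s) y q" if "q \<in> N" for q
    using p that N_subset m_notin_N \<tau> by (auto simp: deform_image_def susp_pt_N lower_eq_0)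
  show "deform_image \<tau> (susp_pt p s y) q = susp_pt p (lower \<tau> s) y q" if q: "q \<in> far m" for q
  proof -
    have "q \<in> P" "q \<noteq> m" "q \<notin> N"
      using q far_subset far_m_disjoint_N notin_far_self by auto
    then show ?thesis
      using p s \<tau> q by (simp add: deform_image_def near_mass_susp_pt susp_pt_far_m far_rescale_susp_pt)
        (simp add: far_rescale_def)
  qed
qed (auto simp: deform_image_def susp_pt_def)

lemma deform_image_in_wedge_image:
  assumes v: "v \<in> wedge_image" and \<tau>: "0 \<le> \<tau>" "\<tau> \<le> 1/2"
  shows "deform_image \<tau> v \<in> wedge_image"
  using v
proof (cases rule: wedge_image_cases)
  case 1
  then show ?thesis
    using \<tau> by (simp add: deform_image_zero_pt zero_pt_in_wedge_image)
next
  case (2 p s y)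
  have "lower \<tau> s < 1 \<Longrightarrow> y \<in> anti_rips_points r (far p)"
    using 2 \<tau> by (cases "s = 1") (auto simp: lower_1)
  then show ?thesis
    using 2 \<tau> by (simp add: deform_image_susp_pt susp_pt_in_wedge_image lower_nonneg lower_le_1)
qed

lemma deform_image_0:
  assumes "v \<in> wedge_image"
  shows "deform_image 0 v = v"
  using assms by (cases rule: wedge_image_cases) (simp_all add: deform_image_zero_pt
      deform_image_susp_pt lower_0)

lemma deform_image_half:
  assumes v: "v \<in> wedge_image"
  shows "deform_image (1/2) v = collapse (expand v)"
  using v
proof (cases rule: wedge_image_cases)
  case 1
  have "collapse (join_pt m {} 1 undefined) = zero_pt"
    by (rule collapse_join_pt_m) simp
  then show ?thesis
    using 1 by (simp add: deform_image_zero_pt expand_zero_pt[of undefined])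
next
  case (2 p s y)
  show ?thesis
  proof (cases "s \<le> 1/2")
    case True
    have "collapse (join_pt m (far p) (1 - 2 * s) y) = zero_pt"
      using 2 N_disjoint_far by (intro collapse_join_pt_m) blast
    then have "collapse (expand v) = zero_pt"
      using 2 True by (simp add: expand_susp_pt_low)
    then show ?thesis
      using 2 True by (simp add: deform_image_susp_pt lower_eq_0 susp_pt_0)
  next
    case False
    then show ?thesis
      using 2 by (simp add: deform_image_susp_pt lower_half expand_susp_pt_high collapse_join_pt)
  qed
qed

lemma continuous_map_coordinate:
  "q \<in> P \<Longrightarrow> continuous_map (subtopology (powertop_real P) S) euclideanreal (\<lambda>x. x q)"
  by (rule continuous_map_from_subtopology[OF continuous_map_product_projection])

lemma continuous_map_near_mass:
  "continuous_map (subtopology (powertop_real P) S) euclideanreal near_mass"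
  unfolding near_mass_def[abs_def] using N_subset finite_N
  by (intro continuous_map_sum) (auto intro: continuous_map_coordinate)

lemma continuous_map_snd_coordinate:
  "q \<in> P \<Longrightarrow> continuous_map (prod_topology Z (subtopology (powertop_real P) S)) euclideanreal
     (\<lambda>w. snd w q)"
  using continuous_map_compose[OF continuous_map_snd continuous_map_coordinate] by (simp add: o_def)

lemma continuous_map_snd_near_mass:
  "continuous_map (prod_topology Z (subtopology (powertop_real P) S)) euclideanreal
     (\<lambda>w. near_mass (snd w))"
  using continuous_map_compose[OF continuous_map_snd continuous_map_near_mass] by (simp add: o_def)

lemma continuous_map_fst_real:
  "continuous_map (prod_topology (top_of_set {0..(1::real)}) Y) euclideanreal fst"
  by (rule continuous_map_into_fulltopology[OF continuous_map_fst])

lemma continuous_map_into_powertop_real_subtopology: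
  assumes "\<And>q. q \<in> P \<Longrightarrow> continuous_map Z euclideanreal (\<lambda>z. f z q)"
    and "f ` topspace Z \<subseteq> S" "S \<subseteq> extensional P"
  shows "continuous_map Z (subtopology (powertop_real P) S) f"
  using assms by (auto simp: continuous_map_in_subtopology continuous_map_componentwise)

lemma continuous_map_collapse: "continuous_map realization embedded_wedge collapse"
  unfolding embedded_wedge_def
proof (rule continuous_map_into_powertop_real_subtopology)
  fix q assume "q \<in> P"
  then show "continuous_map realization euclideanreal (\<lambda>x. collapse x q)"
    unfolding realization_eq collapse_def using m_in_P
    by (simp, intro conjI impI continuous_intros continuous_map_coordinate continuous_map_near_mass)
qed (use collapse_in_wedge_image wedge_image_subset in \<open>auto simp: topspace_realization\<close>)

lemma continuous_map_expand: "continuous_map embedded_wedge realization expand"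
  unfolding realization_eq
proof (rule continuous_map_into_powertop_real_subtopology)
  fix q assume "q \<in> P"
  have "max (near_mass v) (1/2) * (1 - min (near_mass v) (1/2)) \<noteq> 0" for v
    by (simp add: max_def min_def)
  then show "continuous_map embedded_wedge euclideanreal (\<lambda>v. expand v q)"
    unfolding embedded_wedge_def expand_def using \<open>q \<in> P\<close>
    by (simp, intro conjI impI continuous_intros continuous_map_coordinate continuous_map_near_mass; simp)
qed (use expand_in_T in \<open>auto simp: topspace_embedded_wedge anti_rips_points_def\<close>)

lemma continuous_map_deform_realization:
  "continuous_map (prod_topology (top_of_set {0..1}) realization) realization
     (\<lambda>w. deform_realization (fst w / 2) (snd w))"
  unfolding realization_eq
proof (rule continuous_map_into_powertop_real_subtopology)
  let ?Z = "prod_topology (top_of_set {0..(1::real)}) (subtopology (powertop_real P) T)"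
  have lower: "continuous_map ?Z euclideanreal (\<lambda>w. lower (fst w / 2) (snd w q))" if "q \<in> P" for q
    unfolding lower_def using that
    by (intro continuous_intros continuous_map_snd_coordinate continuous_map_fst_real) auto
  have factor: "continuous_map ?Z euclideanreal (\<lambda>w. far_factor (fst w / 2) (snd w))"
    unfolding far_factor_def removed_def
    by (intro continuous_intros continuous_map_snd_near_mass continuous_map_fst_real) auto
  fix q assume q: "q \<in> P"
  consider "q = m" | "q \<in> N" | "q \<in> far m"
    using P_cases[OF q] by blast
  then show "continuous_map ?Z euclideanreal (\<lambda>w. deform_realization (fst w / 2) (snd w) q)"
  proof cases
    case 1
    show ?thesis
      unfolding 1 deform_realization_m removed_def
      by (intro continuous_intros factor continuous_map_snd_coordinate[OF m_in_P]
          continuous_map_snd_near_mass continuous_map_fst_real) auto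
  next
    case 2
    then show ?thesis
      using lower[OF q] by (simp add: deform_realization_N)
  next
    case 3
    then show ?thesis
      by (simp add: deform_realization_far_m)
        (intro continuous_intros factor continuous_map_snd_coordinate[OF q])
  qed
next
  show "(\<lambda>w. deform_realization (fst w / 2) (snd w)) `
      topspace (prod_topology (top_of_set {0..1}) (subtopology (powertop_real P) T)) \<subseteq> T"
    by (auto intro!: deform_realization_in_T)
qed (auto simp: anti_rips_points_def)

lemma continuous_on_far_rescale:
  "continuous_on {(\<tau>, s, z). 0 \<le> \<tau> \<and> \<tau> \<le> 1/2 \<and> 0 \<le> z \<and> z \<le> s} (\<lambda>(\<tau>, s, z). far_rescale \<tau> s z)"
  (is "continuous_on ?D ?f")
  unfolding continuous_on_eq_continuous_within
proof
  fix u assume u: "u \<in> ?D"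
  obtain \<tau> s z where u_eq: "u = (\<tau>, s, z)"
    by (cases u) auto
  show "continuous (at u within ?D) ?f"
  proof (cases "s = 0")
    case False
    have "?f = (\<lambda>u. snd (snd u) * max 0 (fst (snd u) - fst u) / (fst (snd u) * (1 - fst u)\<^sup>2))"
      by (auto simp: far_rescale_def)
    moreover have "continuous (at u) \<dots>"
      using False u u_eq by (intro continuous_intros) auto
    ultimately show ?thesis
      by (simp add: continuous_at_imp_continuous_at_within)
  next
    case True
    then have "z = 0"
      using u u_eq by auto
    have "\<forall>\<^sub>F w in at u within ?D. norm (?f w) \<le> 4 * snd (snd w)"
      unfolding eventually_at by (rule exI[of _ 1]) (auto intro!: abs_far_rescale_le)
    moreover have "((\<lambda>w. 4 * snd (snd w)) \<longlongrightarrow> 0) (at u within ?D)"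
      using tendsto_intros(1)[of "4 * snd (snd u)"] \<open>z = 0\<close> u_eq
      by (auto intro!: tendsto_eq_intros)
    ultimately have "(?f \<longlongrightarrow> 0) (at u within ?D)"
      by (rule Lim_null_comparison)
    then show ?thesis
      using True \<open>z = 0\<close> u_eq by (simp add: continuous_within far_rescale_def)
  qed
qed

lemma continuous_map_far_rescale_coordinate:
  assumes q: "q \<in> far m"
  shows "continuous_map (prod_topology (top_of_set {0..1}) (subtopology (powertop_real P) wedge_image))
     euclideanreal (\<lambda>w. far_rescale (fst w / 2) (near_mass (snd w)) (snd w q))"
proof -
  let ?Z = "prod_topology (top_of_set {0..(1::real)}) (subtopology (powertop_real P) wedge_image)"
  let ?g = "\<lambda>w. (fst w / 2, near_mass (snd w), snd w q)"
  have "q \<in> P"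
    using q far_subset by blast
  then have "continuous_map ?Z (prod_topology euclideanreal (prod_topology euclideanreal euclideanreal)) ?g"
    by (intro continuous_map_pairedI continuous_intros continuous_map_snd_coordinate
        continuous_map_snd_near_mass continuous_map_fst_real) auto
  moreover have "?g ` topspace ?Z \<subseteq> {(\<tau>, s, z). 0 \<le> \<tau> \<and> \<tau> \<le> 1/2 \<and> 0 \<le> z \<and> z \<le> s}"
    using wedge_image_subset wedge_image_far_coord[OF _ q] by (auto simp: PiE_def)
  ultimately have "continuous_map ?Z euclideanreal ((\<lambda>(\<tau>, s, z). far_rescale \<tau> s z) \<circ> ?g)"
    by (intro continuous_map_compose_continuous_on[OF continuous_on_far_rescale]) simp_all
  then show ?thesis
    by (simp add: o_def)
qed

lemma continuous_map_deform_image: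
  "continuous_map (prod_topology (top_of_set {0..1}) embedded_wedge) embedded_wedge
     (\<lambda>w. deform_image (fst w / 2) (snd w))"
  unfolding embedded_wedge_def
proof (rule continuous_map_into_powertop_real_subtopology)
  let ?Z = "prod_topology (top_of_set {0..(1::real)}) (subtopology (powertop_real P) wedge_image)"
  fix q assume q: "q \<in> P"
  consider "q = m" | "q \<in> N" | "q \<in> far m"
    using P_cases[OF q] by blast
  then show "continuous_map ?Z euclideanreal (\<lambda>w. deform_image (fst w / 2) (snd w) q)"
  proof cases
    case 1
    then show ?thesis
      using q by (simp add: deform_image_def)
  next
    case 2
    then show ?thesis
      using q m_notin_N unfolding deform_image_def lower_def
      by (auto intro!: continuous_intros continuous_map_snd_coordinate continuous_map_fst_real)
  next
    case 3
    then have "q \<noteq> m" "q \<notin> N"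
      using notin_far_self far_m_disjoint_N by auto
    then show ?thesis
      using q continuous_map_far_rescale_coordinate[OF 3] by (simp add: deform_image_def)
  qed
qed (auto simp: deform_image_in_wedge_image wedge_image_subset[THEN subsetD])

lemma realization_homotopy_equivalent_embedded_wedge:
  "realization homotopy_equivalent_space embedded_wedge"
proof (rule homotopy_equivalent_space_by_homotopies[OF continuous_map_collapse continuous_map_expand
      continuous_map_deform_realization _ _ continuous_map_deform_image])
  show "\<And>x. x \<in> topspace realization \<Longrightarrow> deform_realization (fst (0, x) / 2) (snd (0, x)) = x"
    "\<And>x. x \<in> topspace realization \<Longrightarrow>
      deform_realization (fst (1, x) / 2) (snd (1, x)) = expand (collapse x)"
    by (simp_all add: topspace_realization deform_realization_0 deform_realization_half)
  show "\<And>v. v \<in> topspace embedded_wedge \<Longrightarrow> deform_image (fst (0, v) / 2) (snd (0, v)) = v"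
    "\<And>v. v \<in> topspace embedded_wedge \<Longrightarrow>
      deform_image (fst (1, v) / 2) (snd (1, v)) = collapse (expand v)"
    by (simp_all add: topspace_embedded_wedge deform_image_0 deform_image_half)
qed

lemma compact_space_far_susp: "compact_space (far_susp p)"
proof -
  let ?Y = "prod_topology (far_realization p) (top_of_set {-1..(1::real)})"
  have "compact_space ?Y"
    using compact_space_geom_realization_anti_rips[OF finite_far]
    by (simp add: compact_space_prod_topology far_realization_def compact_space_subtopology)
  moreover have "continuous_map ?Y (far_susp p) susp_map"
    unfolding far_susp_eq
    by (rule continuous_map_quotient_topology_map) (auto simp: topspace_far_realization)
  ultimately have "compactin (far_susp p) (susp_map ` topspace ?Y)"
    by (simp add: compact_space_def image_compactin)
  moreover have "compactin (far_susp p) {North, South}"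
    by (rule finite_imp_compactin) (auto simp: topspace_far_susp)
  ultimately have "compactin (far_susp p) ({North, South} \<union> susp_map ` topspace ?Y)"
    by (intro compactin_Un)
  moreover have "topspace (far_susp p) = {North, South} \<union> susp_map ` topspace ?Y"
    by (simp add: topspace_far_susp topspace_far_realization)
  ultimately show ?thesis
    by (simp add: compact_space_def)
qed

lemma continuous_map_wedge_quot:
  assumes "p \<in> N"
  shows "continuous_map (far_susp p) wedge_space (\<lambda>z. wedge_quot (p, z))"
proof -
  have "continuous_map (sum_topology far_susp N) wedge_space wedge_quot"
    unfolding wedge_space_eq by (rule continuous_map_quotient_topology_map) auto
  then show ?thesis
    using continuous_map_compose[OF continuous_map_component_injection[OF assms]]
    by (simp add: o_def)
qed

lemma compact_space_wedge_space: "compact_space wedge_space"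
proof -
  let ?S = "\<lambda>p. (\<lambda>z. wedge_quot (p, z)) ` topspace (far_susp p)"
  have "compactin wedge_space (?S p)" if "p \<in> N" for p
    using compact_space_far_susp[of p] continuous_map_wedge_quot[OF that]
    by (simp add: compact_space_def image_compactin)
  then have "compactin wedge_space (\<Union>(?S ` N))"
    using finite_N by (intro compactin_Union) auto
  moreover have "compactin wedge_space {None}"
    by (rule finite_imp_compactin) (auto simp: topspace_wedge_space)
  ultimately have "compactin wedge_space ({None} \<union> \<Union>(?S ` N))"
    by (intro compactin_Un)
  moreover have "topspace wedge_space = {None} \<union> \<Union>(?S ` N)"
    unfolding topspace_wedge_space by force
  ultimately show ?thesis
    by (simp add: compact_space_def)
qed

lemma Hausdorff_space_embedded_wedge: "Hausdorff_space embedded_wedge"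
  unfolding embedded_wedge_def
  by (intro Hausdorff_space_subtopology) (simp add: Hausdorff_space_product_topology)

lemma continuous_map_susp_pt:
  "continuous_map (prod_topology (far_realization p) (top_of_set {-1..1})) (powertop_real P)
     (\<lambda>w. susp_pt p ((1 - snd w) / 2) (fst w))"
  unfolding continuous_map_componentwise
proof (intro conjI ballI)
  let ?Y = "prod_topology (far_realization p) (top_of_set {-1..(1::real)})"
  show "(\<lambda>w. susp_pt p ((1 - snd w) / 2) (fst w)) ` topspace ?Y \<subseteq> extensional P"
    by (auto simp: susp_pt_def)
  have snd: "continuous_map ?Y euclideanreal snd"
    by (rule continuous_map_into_fulltopology[OF continuous_map_snd])
  have fst: "continuous_map ?Y euclideanreal (\<lambda>w. fst w q)" if "q \<in> far p" for q
  proof -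
    have "continuous_map (far_realization p) euclideanreal (\<lambda>y. y q)"
      unfolding far_realization_def geom_realization_anti_rips[OF finite_far]
      by (rule continuous_map_from_subtopology[OF continuous_map_product_projection[OF that]])
    then show ?thesis
      using continuous_map_compose[OF continuous_map_fst] by (simp add: o_def)
  qed
  fix q assume "q \<in> P"
  then show "continuous_map ?Y euclideanreal (\<lambda>w. susp_pt p ((1 - snd w) / 2) (fst w) q)"
    by (simp add: susp_pt_def) (intro conjI impI continuous_intros snd fst; simp)
qed

lemma continuous_map_embed_susp: "continuous_map (far_susp p) (powertop_real P) (embed_susp p)"
  unfolding far_susp_eq
proof (rule continuous_map_from_quotient_topology)
  show "embed_susp p ` ({North, South} \<union> susp_map ` (anti_rips_points r (far p) \<times> {-1..1}))
      \<subseteq> topspace (powertop_real P)"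
    by (auto simp: embed_susp_def susp_map_def susp_pt_def zero_pt_def PiE_def)
  show "continuous_map (prod_topology (far_realization p) (top_of_set {-1..1})) (powertop_real P)
      (embed_susp p \<circ> susp_map)"
    by (rule continuous_map_eq[OF continuous_map_susp_pt])
      (auto simp: embed_susp_susp_map topspace_far_realization)
qed (auto simp: topspace_far_realization)

lemma continuous_map_embed_wedge: "continuous_map wedge_space embedded_wedge embed_wedge"
  unfolding wedge_space_eq
proof (rule continuous_map_from_quotient_topology)
  have topspace_eq: "insert None (wedge_quot ` topspace (sum_topology far_susp N)) = topspace wedge_space"
    by (auto simp: topspace_wedge_space)
  show "embed_wedge ` insert None (wedge_quot ` topspace (sum_topology far_susp N))
      \<subseteq> topspace embedded_wedge"
    unfolding topspace_eq by (simp add: topspace_embedded_wedge wedge_image_def)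
  show "continuous_map (sum_topology far_susp N) embedded_wedge (embed_wedge \<circ> wedge_quot)"
    unfolding embedded_wedge_def
  proof (rule continuous_map_into_subtopology)
    show "continuous_map (sum_topology far_susp N) (powertop_real P) (embed_wedge \<circ> wedge_quot)"
      by (rule continuous_map_from_sum_topology) (simp add: embed_wedge_simps continuous_map_embed_susp)
    show "embed_wedge \<circ> wedge_quot \<in> topspace (sum_topology far_susp N) \<rightarrow> wedge_image"
      unfolding wedge_image_def topspace_eq[symmetric] by auto
  qed
qed auto

lemma susp_pt_inject:
  assumes "p \<in> N" "p' \<in> N" "0 < s" "susp_pt p s y = susp_pt p' s' y'"
  shows "p = p'" "s = s'"
proof -
  have "s = susp_pt p s y p"
    using assms(1) by (simp add: susp_pt_N)
  also have "\<dots> = (if p = p' then s' else 0)"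
    using assms(1,2) by (simp add: assms(4) susp_pt_N)
  finally show "p = p'" "s = s'"
    using assms(3) by (auto split: if_splits)
qed

lemma susp_pt_inject_far:
  assumes "0 < s" "s < 1" "y \<in> extensional (far p)" "y' \<in> extensional (far p)"
    and "susp_pt p s y = susp_pt p s y'"
  shows "y = y'"
proof (rule extensionalityI[OF assms(3,4)])
  fix q assume q: "q \<in> far p"
  moreover have "q \<in> P" "q \<noteq> p"
    using q far_subset notin_far_self by auto
  ultimately have "s * (1 - s) * y q = s * (1 - s) * y' q"
    using fun_cong[OF assms(5), of q] by (simp add: susp_pt_def)
  then show "y q = y' q"
    using assms(1,2) by simp
qed

lemma zero_pt_neq_susp_pt: "p \<in> N \<Longrightarrow> 0 < s \<Longrightarrow> zero_pt \<noteq> susp_pt p s y"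
  using N_subset by (auto simp: zero_pt_def susp_pt_def fun_eq_iff)

lemma embed_wedge_eq_zero_pt:
  assumes "w \<in> topspace wedge_space" "embed_wedge w = zero_pt"
  shows "w = None"
  using assms(1)
proof (cases rule: wedge_space_cases)
  case (2 p s y)
  then show ?thesis
    using assms(2) zero_pt_neq_susp_pt[of p s y] by simp
qed

lemma embed_wedge_inject:
  assumes w: "w \<in> topspace wedge_space" and w': "w' \<in> topspace wedge_space"
    and eq: "embed_wedge w = embed_wedge w'" and "w \<noteq> None" "w' \<noteq> None"
  shows "w = w'"
proof -
  obtain p s y where p: "p \<in> N" "0 < s" "s \<le> 1" "s < 1 \<Longrightarrow> y \<in> anti_rips_points r (far p)"
      and w_eq: "w = Some (p, if s = 1 then South else Mid y (1 - 2 * s))"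
      and embed: "embed_wedge w = susp_pt p s y"
    using w \<open>w \<noteq> None\<close> by (cases rule: wedge_space_cases) blast+
  obtain p' s' y' where p': "p' \<in> N" "s' < 1 \<Longrightarrow> y' \<in> anti_rips_points r (far p')"
      and w'_eq: "w' = Some (p', if s' = 1 then South else Mid y' (1 - 2 * s'))"
      and embed': "embed_wedge w' = susp_pt p' s' y'"
    using w' \<open>w' \<noteq> None\<close> by (cases rule: wedge_space_cases) blast+
  have same: "susp_pt p s y = susp_pt p' s' y'"
    using eq embed embed' by simp
  then have "p = p'" "s = s'"
    using susp_pt_inject[OF p(1) p'(1) p(2)] by auto
  moreover have "y = y'" if "s \<noteq> 1"
  proof -
    have "s < 1"
      using that p(3) by simp
    then show ?thesis
      using p p' same \<open>p = p'\<close> \<open>s = s'\<close>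
      by (intro susp_pt_inject_far[of s y p y']) (auto simp: anti_rips_points_def)
  qed
  ultimately show ?thesis
    using w_eq w'_eq by auto
qed

lemma inj_on_embed_wedge: "inj_on embed_wedge (topspace wedge_space)"
proof
  fix w w' assume w: "w \<in> topspace wedge_space" and w': "w' \<in> topspace wedge_space"
    and eq: "embed_wedge w = embed_wedge w'"
  show "w = w'"
  proof (cases "w = None \<or> w' = None")
    case True
    have "w' = None" if "w = None"
      using embed_wedge_eq_zero_pt[OF w'] eq that by (simp add: embed_wedge_simps)
    moreover have "w = None" if "w' = None"
      using embed_wedge_eq_zero_pt[OF w] eq that by (simp add: embed_wedge_simps)
    ultimately show ?thesis
      using True by blast
  next
    case False
    then show ?thesis
      using embed_wedge_inject[OF w w' eq] by blast
  qed
qed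

lemma wedge_space_homeomorphic_embedded_wedge: "wedge_space homeomorphic_space embedded_wedge"
proof -
  have "homeomorphic_map wedge_space embedded_wedge embed_wedge"
  proof (rule bijective_closed_imp_homeomorphic_map[OF continuous_map_embed_wedge])
    show "closed_map wedge_space embedded_wedge embed_wedge"
      by (rule continuous_imp_closed_map[OF continuous_map_embed_wedge compact_space_wedge_space
            Hausdorff_space_embedded_wedge])
    show "embed_wedge ` topspace wedge_space = topspace embedded_wedge"
      by (simp add: topspace_embedded_wedge wedge_image_def)
  qed (rule inj_on_embed_wedge)
  then show ?thesis
    by (rule homeomorphic_map_imp_homeomorphic_space)
qed

end

theorem proposition4p2:
  fixes r :: real and P :: "real set"
  assumes "r \<ge> 0" and "finite P" and "P \<noteq> {}"
  shows "geom_realization P (anti_rips r P) homotopy_equivalent_space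
         wedge (\<lambda>p. suspension (geom_realization {q\<in>P. q > p + r} (anti_rips r {q\<in>P. q > p + r})))
               (\<lambda>p. North)
               {p\<in>P. Min P < p \<and> p \<le> Min P + r}"
proof -
  interpret anti_rips_line r P
    using assms by unfold_locales
  have "realization homotopy_equivalent_space embedded_wedge"
    by (rule realization_homotopy_equivalent_embedded_wedge)
  also have "embedded_wedge homotopy_equivalent_space wedge_space"
    using wedge_space_homeomorphic_embedded_wedge homeomorphic_imp_homotopy_equivalent_space
      homotopy_equivalent_space_sym by blast
  finally show ?thesis
    unfolding realization_def wedge_space_def far_susp_def far_realization_def far_def N_def .
qed

end
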